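(* Let $\{C(G_n,S_n)\}_{n\ge1}$ be a family of expanders (with $G_n$ finite groups and $S_n$ symmetric subsets) of degree bounded by $d$. Let $k\ge2$ be an integer and, for each $n$, let $\sigma_{1n},\dots,\sigma_{kn}$ be pairwise commuting automorphisms of $G_n$ of order at most $2$. Let $T_n=S_n\cup\bigcup_i\sigma_{in}(S_n)\cup\bigcup_{i,j}(\sigma_{in}\circ\sigma_{jn})(S_n)\cup\cdots\cup(\sigma_{1n}\circ\sigma_{2n}\circ\cdots\circ\sigma_{kn})(S_n)$, i.e. $T_n=\bigcup_{I\subseteq\{1,\dots,k\}}(\prod_{i\in I}\sigma_{in})(S_n)$. Then: (1) for each $1\le i\le k$, the twisted Cayley graphs $\{C(G_n,T_n)^{\sigma_{in}}\}_n$ form a family of expanders of degree bounded by $2^kd$; (2) for any $1\le i,j\le k$, the eigenvalues of the adjacency operators of $C(G_n,T_n)^{\sigma_{in}}$ and $C(G_n,T_n)^{\sigma_{jn}}$ coincide up to factors of $\pm1$.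
   Context: $C(G,S)$ has vertex set $G$ and an edge from $x$ to $xs$ for each $s\in S$; for an automorphism $\tau$, $C(G,S)^\tau$ has an edge from $x$ to $\tau(xs)$. A family of expanders of degree bounded by $d$ is a sequence of finite undirected graphs of degree at most $d$, together with a constant $\varepsilon>0$ such that each graph is an $\varepsilon$-vertex expander: for every vertex set $A$ with $|A|\le|V|/2$, at least $\varepsilon|A|$ vertices outside $A$ are adjacent to some vertex of $A$. "Up to factors of $\pm1$" means there is a bijection between the multisets of eigenvalues under which each eigenvalue is sent to itself or its negative. *)

theory Defs
  imports "HOL-Algebra.Group" "Jordan_Normal_Form.Char_Poly" "HOL-Library.Multiset"
begin

definition vertex_boundary :: "'a set \<Rightarrow> ('a \<Rightarrow> 'a \<Rightarrow> bool) \<Rightarrow> 'a set \<Rightarrow> 'a set" where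
  "vertex_boundary V adj A = {y \<in> V - A. \<exists>a\<in>A. adj a y}"

definition vertex_expander :: "'a set \<Rightarrow> ('a \<Rightarrow> 'a \<Rightarrow> bool) \<Rightarrow> real \<Rightarrow> bool" where
  "vertex_expander V adj \<epsilon> \<longleftrightarrow>
     (\<forall>A \<subseteq> V. real (card A) \<le> real (card V) / 2 \<longrightarrow>
        real (card (vertex_boundary V adj A)) \<ge> \<epsilon> * real (card A))"

definition undirected_bounded_degree :: "'a set \<Rightarrow> ('a \<Rightarrow> 'a \<Rightarrow> bool) \<Rightarrow> nat \<Rightarrow> bool" where
  "undirected_bounded_degree V adj d \<longleftrightarrow>
     finite V \<and> (\<forall>x\<in>V. \<forall>y\<in>V. adj x y \<longleftrightarrow> adj y x)
     \<and> (\<forall>x y. adj x y \<longrightarrow> x \<in> V \<and> y \<in> V)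
     \<and> (\<forall>x\<in>V. card {y \<in> V. adj x y} \<le> d)"

definition expander_family ::
  "(nat \<Rightarrow> 'a set) \<Rightarrow> (nat \<Rightarrow> 'a \<Rightarrow> 'a \<Rightarrow> bool) \<Rightarrow> nat \<Rightarrow> bool" where
  "expander_family V adj d \<longleftrightarrow>
     (\<forall>n. undirected_bounded_degree (V n) (adj n) d) \<and>
     (\<exists>\<epsilon>>0. \<forall>n. vertex_expander (V n) (adj n) \<epsilon>)"

text \<open>C(G,S)^tau: edge from x to tau(x s) for each s in S. C(G,S) is the case tau = id.\<close>
definition cayley_adj :: "('a, 'b) monoid_scheme \<Rightarrow> 'a set \<Rightarrow> ('a \<Rightarrow> 'a) \<Rightarrow> 'a \<Rightarrow> 'a \<Rightarrow> bool" where
  "cayley_adj G S \<tau> x y \<longleftrightarrow> x \<in> carrier G \<and> (\<exists>s\<in>S. y = \<tau> (x \<otimes>\<^bsub>G\<^esub> s))"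

text \<open>Adjacency operator (counting edges with multiplicity), as a matrix w.r.t. an
  enumeration of the group; its spectrum does not depend on the enumeration.\<close>
definition group_enum :: "('a, 'b) monoid_scheme \<Rightarrow> nat \<Rightarrow> 'a" where
  "group_enum G = (SOME e. bij_betw e {..<card (carrier G)} (carrier G))"

definition cayley_adj_matrix :: "('a, 'b) monoid_scheme \<Rightarrow> 'a set \<Rightarrow> ('a \<Rightarrow> 'a) \<Rightarrow> complex mat" where
  "cayley_adj_matrix G S \<tau> =
     (let N = card (carrier G); e = group_enum G in
      mat N N (\<lambda>(i, j). of_nat (card {s \<in> S. \<tau> (e i \<otimes>\<^bsub>G\<^esub> s) = e j})))"

definition eigenvalues_mset :: "complex mat \<Rightarrow> complex multiset" where
  "eigenvalues_mset A = proots (char_poly A)"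

definition equal_up_to_sign :: "complex multiset \<Rightarrow> complex multiset \<Rightarrow> bool" where
  "equal_up_to_sign M N \<longleftrightarrow>
     (\<exists>xs ys. mset xs = M \<and> mset ys = N \<and> list_all2 (\<lambda>a b. b = a \<or> b = - a) xs ys)"

definition comp_over :: "(nat \<Rightarrow> 'a \<Rightarrow> 'a) \<Rightarrow> nat set \<Rightarrow> 'a \<Rightarrow> 'a" where
  "comp_over \<sigma> I = fold (\<lambda>i f. \<sigma> i \<circ> f) (sorted_list_of_set I) id"

definition twist_closure :: "(nat \<Rightarrow> 'a \<Rightarrow> 'a) \<Rightarrow> nat \<Rightarrow> 'a set \<Rightarrow> 'a set" where
  "twist_closure \<sigma> k S = (\<Union>I \<in> Pow {1..k}. comp_over \<sigma> I ` S)"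

end

theory Submission
  imports Defs "HOL-Algebra.Coset" "Jordan_Normal_Form.Schur_Decomposition"
begin

(*
  Spectra: for an involutive automorphism \<sigma> with \<sigma>(T) = T, two steps
  x \<mapsto> \<sigma>(x t) \<mapsto> \<sigma>(\<sigma>(x t) u) = x t \<sigma>(u) of the twisted Cayley graph C(G,T)^\<sigma> correspond,
  via u \<mapsto> \<sigma>(u), to two steps of C(G,T).  Hence all twisted adjacency matrices have the same
  square, and the eigenvalues of a squared matrix are the squares of its eigenvalues.  T is
  \<sigma>\<^sub>i-invariant because, the \<sigma>\<^sub>j being commuting involutions, composing \<sigma>\<^sub>i with the
  product of the \<sigma>\<^sub>j over I gives the product over I with i added or removed.

  Expansion: suppose A, with |A| \<le> |G|/2, has a twisted boundary E that is tiny compared to A.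
  As S and \<sigma>(S) lie in T, right multiplication by S maps A into B = \<sigma>(A) and B into A, up to
  \<sigma>(E) and E.  Expansion of C(G,S) then forces A \<inter> B to be small and A \<union> B to cover almost
  all of G; applied to (A \<inter> gA) \<union> (B \<inter> gB) it shows that |A \<inter> gA| is either tiny or close
  to |A|.  The g of the second kind form a \<sigma>-invariant subgroup of index two, and counting
  pairs shows that A lies essentially in one of its two cosets.  That coset is \<sigma>-invariant, so
  it essentially contains B as well, which is impossible for a set of about |A| elements.
*)

section \<open>Eigenvalues of squares\<close>

lemma proots_prod_linear_factors:
  "proots (\<Prod>a\<leftarrow>as. [:- a, 1:]) = mset (as :: 'a :: idom list)"
proof (induction as)
  case (Cons a as)
  have "(\<Prod>a\<leftarrow>as. [:- a, 1:]) \<noteq> 0"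
    by (auto simp: prod_list_zero_iff)
  then show ?case
    using Cons.IH by (simp add: proots_mult del: mult_pCons_left)
qed simp

lemma upper_triangular_mult_entry:
  assumes U: "U \<in> carrier_mat n n" and V: "V \<in> carrier_mat n n"
    and upper_U: "upper_triangular U" and upper_V: "upper_triangular V"
    and ji: "j \<le> i" and i: "i < n"
  shows "(U * V) $$ (i, j) = (if i = j then U $$ (i, i) * V $$ (i, i) else 0)"
proof -
  have "(U * V) $$ (i, j) = (\<Sum>l<n. U $$ (i, l) * V $$ (l, j))"
    using U V ji i by (auto simp: scalar_prod_def atLeast0LessThan)
  also have "\<dots> = (\<Sum>l<n. if l = i \<and> i = j then U $$ (i, i) * V $$ (i, i) else 0)"
  proof (rule sum.cong)
    fix l assume l: "l \<in> {..<n}"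
    consider "l < i" | "j < l" | "l = i \<and> i = j"
      using ji by linarith
    then show "U $$ (i, l) * V $$ (l, j) = (if l = i \<and> i = j then U $$ (i, i) * V $$ (i, i) else 0)"
    proof cases
      case 1
      then show ?thesis using upper_triangularD[OF upper_U 1] U i by auto
    next
      case 2
      then show ?thesis using upper_triangularD[OF upper_V 2] V l by auto
    qed auto
  qed simp
  finally show ?thesis
    using i by simp
qed

lemma eigenvalues_mset_square:
  fixes A :: "complex mat"
  assumes A: "A \<in> carrier_mat n n"
  shows "eigenvalues_mset (A * A) = image_mset (\<lambda>x. x * x) (eigenvalues_mset A)"
proof -
  obtain as where char_A: "char_poly A = (\<Prod>a\<leftarrow>as. [:- a, 1:])"
    using char_poly_factorized[OF A] by blast
  obtain B P Q where schur: "schur_decomposition A as = (B, P, Q)"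
    by (cases "schur_decomposition A as") auto
  from schur_decomposition[OF A char_A schur]
  have sim: "similar_mat_wit A B P Q" and upper: "upper_triangular B" and diag: "diag_mat B = as"
    by auto
  have B: "B \<in> carrier_mat n n"
    using similar_mat_witD2[OF A sim] by auto
  note BB_entry = upper_triangular_mult_entry[OF B B upper upper]
  have "similar_mat_wit (A * A) (B * B) P Q"
    using similar_mat_wit_pow[OF sim, of 2] A B by (simp add: numeral_2_eq_2)
  then have "char_poly (A * A) = char_poly (B * B)"
    by (intro char_poly_similar) (auto simp: similar_mat_def)
  also have "\<dots> = (\<Prod>a\<leftarrow>diag_mat (B * B). [:- a, 1:])"
    using B BB_entry by (intro char_poly_upper_triangular[of _ n] upper_triangularI) auto
  also have "diag_mat (B * B) = map (\<lambda>x. x * x) as"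
    using B BB_entry by (auto simp: diag[symmetric] diag_mat_def)
  finally show ?thesis
    unfolding eigenvalues_mset_def char_A by (simp only: proots_prod_linear_factors mset_map)
qed

lemma equal_up_to_sign_if_squares_eq:
  fixes M N :: "complex multiset"
  assumes "image_mset (\<lambda>x. x * x) M = image_mset (\<lambda>x. x * x) N"
  shows "equal_up_to_sign M N"
  using assms
proof (induction M arbitrary: N)
  case empty
  then show ?case
    unfolding equal_up_to_sign_def by (intro exI[of _ "[]"]) auto
next
  case (add x M)
  then have "x * x \<in># image_mset (\<lambda>x. x * x) N"
    by (metis union_single_eq_member image_mset_add_mset)
  then obtain y where "y \<in># N" and y_sq: "y * y = x * x"
    by auto
  then obtain N' where N: "N = add_mset y N'"
    by (blast dest: multi_member_split)
  have y: "y = x \<or> y = - x"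
    using y_sq by (simp add: square_eq_iff)
  have "image_mset (\<lambda>x. x * x) M = image_mset (\<lambda>x. x * x) N'"
    using add.prems y_sq by (simp add: N)
  then obtain xs ys where "mset xs = M" "mset ys = N'" "list_all2 (\<lambda>a b. b = a \<or> b = - a) xs ys"
    using add.IH unfolding equal_up_to_sign_def by blast
  then show ?case
    unfolding equal_up_to_sign_def N using y by (intro exI[of _ "x # xs"] exI[of _ "y # ys"]) auto
qed

section \<open>Squares of twisted adjacency matrices\<close>

lemma bij_betw_group_enum:
  assumes "finite (carrier G)"
  shows "bij_betw (group_enum G) {..<card (carrier G)} (carrier G)"
proof -
  have "\<exists>e. bij_betw e {..<card (carrier G)} (carrier G)"
    using ex_bij_betw_nat_finite[OF assms] by (auto simp: atLeast0LessThan)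
  then show ?thesis
    unfolding group_enum_def by (rule someI_ex)
qed

lemma cayley_adj_matrix_carrier:
  "cayley_adj_matrix G T \<tau> \<in> carrier_mat (card (carrier G)) (card (carrier G))"
  by (simp add: cayley_adj_matrix_def Let_def)

context group
begin

lemma cayley_adj_matrix_square_entry:
  assumes fin: "finite (carrier G)" and T: "T \<subseteq> carrier G"
    and \<tau>: "\<tau> ` carrier G \<subseteq> carrier G"
    and i: "i < card (carrier G)" and j: "j < card (carrier G)"
  shows "(cayley_adj_matrix G T \<tau> * cayley_adj_matrix G T \<tau>) $$ (i, j)
     = of_nat (\<Sum>t\<in>T. card {u \<in> T. \<tau> (\<tau> (group_enum G i \<otimes> t) \<otimes> u) = group_enum G j})"
proof -
  define e where "e = group_enum G"
  define walks_from where "walks_from z = card {u \<in> T. \<tau> (z \<otimes> u) = e j}" for z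
  have e: "bij_betw e {..<card (carrier G)} (carrier G)"
    unfolding e_def using fin by (rule bij_betw_group_enum)
  then have ei: "e i \<in> carrier G"
    using i by (auto dest: bij_betwE)
  have "(cayley_adj_matrix G T \<tau> * cayley_adj_matrix G T \<tau>) $$ (i, j)
      = (\<Sum>l<card (carrier G). of_nat (card {t \<in> T. \<tau> (e i \<otimes> t) = e l}) * of_nat (walks_from (e l)))"
    using i j unfolding cayley_adj_matrix_def Let_def e_def walks_from_def
    by (simp add: scalar_prod_def atLeast0LessThan)
  also have "\<dots> = (\<Sum>z\<in>carrier G. of_nat (card {t \<in> T. \<tau> (e i \<otimes> t) = z}) * of_nat (walks_from z))"
    by (rule sum.reindex_bij_betw[OF e])
  also have "\<dots> = (\<Sum>t\<in>T. of_nat (walks_from (\<tau> (e i \<otimes> t))))"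
    using T \<tau> ei fin finite_subset[OF T fin]
    by (intro sum_fun_comp[symmetric]) (auto simp: image_subset_iff)
  finally show ?thesis
    by (simp add: walks_from_def e_def)
qed

lemma cayley_adj_matrix_twisted_square:
  assumes fin: "finite (carrier G)" and T: "T \<subseteq> carrier G"
    and \<sigma>_hom: "\<sigma> \<in> hom G G" and \<sigma>_inv: "\<And>x. x \<in> carrier G \<Longrightarrow> \<sigma> (\<sigma> x) = x"
    and \<sigma>_T: "\<sigma> ` T \<subseteq> T"
  shows "cayley_adj_matrix G T \<sigma> * cayley_adj_matrix G T \<sigma>
       = cayley_adj_matrix G T id * cayley_adj_matrix G T id"
proof -
  have \<sigma>_carrier: "\<sigma> ` carrier G \<subseteq> carrier G"
    using hom_carrier[OF \<sigma>_hom] .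
  have count_eq: "card {u \<in> T. \<sigma> (\<sigma> y \<otimes> u) = z} = card {u \<in> T. y \<otimes> u = z}"
    if y: "y \<in> carrier G" for y z
  proof -
    have twist: "\<sigma> (\<sigma> y \<otimes> u) = y \<otimes> \<sigma> u" if "u \<in> T" for u
      using that y T \<sigma>_carrier \<sigma>_inv hom_mult[OF \<sigma>_hom, of "\<sigma> y" u] by auto
    have "{u \<in> T. \<sigma> (\<sigma> y \<otimes> u) = z} = \<sigma> ` {u \<in> T. y \<otimes> u = z}"
    proof (intro equalityI subsetI)
      fix u assume u: "u \<in> {u \<in> T. \<sigma> (\<sigma> y \<otimes> u) = z}"
      then have "\<sigma> u \<in> {u \<in> T. y \<otimes> u = z}" "u = \<sigma> (\<sigma> u)"
        using twist \<sigma>_T T \<sigma>_inv by auto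
      then show "u \<in> \<sigma> ` {u \<in> T. y \<otimes> u = z}"
        by blast
    next
      fix u assume "u \<in> \<sigma> ` {u \<in> T. y \<otimes> u = z}"
      then obtain v where v: "v \<in> T" "y \<otimes> v = z" "u = \<sigma> v"
        by blast
      then have "\<sigma> u = v"
        using T \<sigma>_inv by auto
      then show "u \<in> {u \<in> T. \<sigma> (\<sigma> y \<otimes> u) = z}"
        using v twist[of u] \<sigma>_T by auto
    qed
    moreover have "inj_on \<sigma> T"
      using T \<sigma>_inv by (metis inj_on_inverseI subsetD)
    ultimately show ?thesis
      by (simp add: card_image inj_on_subset)
  qed
  show ?thesis
  proof (rule eq_matI)
    fix i j
    assume "i < dim_row (cayley_adj_matrix G T id * cayley_adj_matrix G T id)"
      and "j < dim_col (cayley_adj_matrix G T id * cayley_adj_matrix G T id)"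
    then have i: "i < card (carrier G)" and j: "j < card (carrier G)"
      by (auto simp: cayley_adj_matrix_def Let_def)
    have "group_enum G i \<in> carrier G"
      using bij_betw_group_enum[OF fin] i by (auto dest: bij_betwE)
    then show "(cayley_adj_matrix G T \<sigma> * cayley_adj_matrix G T \<sigma>) $$ (i, j)
        = (cayley_adj_matrix G T id * cayley_adj_matrix G T id) $$ (i, j)"
      using T count_eq
      by (simp add: cayley_adj_matrix_square_entry[OF fin T \<sigma>_carrier i j]
          cayley_adj_matrix_square_entry[OF fin T _ i j] subset_iff)
  qed (simp_all add: cayley_adj_matrix_def Let_def)
qed

lemma eigenvalues_twisted_cayley_equal_up_to_sign:
  assumes fin: "finite (carrier G)" and T: "T \<subseteq> carrier G"
    and "\<sigma> \<in> hom G G" "\<And>x. x \<in> carrier G \<Longrightarrow> \<sigma> (\<sigma> x) = x" "\<sigma> ` T \<subseteq> T"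
    and "\<sigma>' \<in> hom G G" "\<And>x. x \<in> carrier G \<Longrightarrow> \<sigma>' (\<sigma>' x) = x" "\<sigma>' ` T \<subseteq> T"
  shows "equal_up_to_sign (eigenvalues_mset (cayley_adj_matrix G T \<sigma>))
           (eigenvalues_mset (cayley_adj_matrix G T \<sigma>'))"
proof (rule equal_up_to_sign_if_squares_eq)
  have "cayley_adj_matrix G T \<sigma> * cayley_adj_matrix G T \<sigma>
      = cayley_adj_matrix G T \<sigma>' * cayley_adj_matrix G T \<sigma>'"
    using cayley_adj_matrix_twisted_square[OF fin T] assms by metis
  then show "image_mset (\<lambda>x. x * x) (eigenvalues_mset (cayley_adj_matrix G T \<sigma>))
      = image_mset (\<lambda>x. x * x) (eigenvalues_mset (cayley_adj_matrix G T \<sigma>'))"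
    by (metis eigenvalues_mset_square[OF cayley_adj_matrix_carrier])
qed

end

section \<open>Products of commuting involutions\<close>

lemma comp_over_empty [simp]: "comp_over f {} = id"
  by (simp add: comp_over_def)

lemma comp_over_singleton [simp]: "comp_over f {i} = f i"
  by (simp add: comp_over_def)

lemma comp_over_hom:
  assumes "\<And>i. i \<in> I \<Longrightarrow> f i \<in> hom G G"
  shows "comp_over f I \<in> hom G G"
proof -
  have "fold (\<lambda>i h. f i \<circ> h) xs h \<in> hom G G" if "set xs \<subseteq> I" "h \<in> hom G G" for xs h
    using that by (induction xs arbitrary: h) (auto intro: hom_compose assms)
  moreover have "set (sorted_list_of_set I) \<subseteq> I"
    by (cases "finite I") auto
  moreover have "id \<in> hom G G"
    by (simp add: hom_def)
  ultimately show ?thesis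
    unfolding comp_over_def by blast
qed

lemma comp_over_cong_on:
  assumes f_C: "\<And>i x. i \<in> I \<Longrightarrow> x \<in> C \<Longrightarrow> f i x \<in> C"
    and g_f: "\<And>i x. i \<in> I \<Longrightarrow> x \<in> C \<Longrightarrow> g i x = f i x"
    and x: "x \<in> C"
  shows "comp_over g I x = comp_over f I x"
proof -
  have "fold (\<lambda>i h. g i \<circ> h) xs id x = fold (\<lambda>i h. f i \<circ> h) xs id x
      \<and> fold (\<lambda>i h. f i \<circ> h) xs id x \<in> C" if "set xs \<subseteq> I" for xs
    using that by (induction xs rule: rev_induct) (auto simp: f_C g_f x)
  moreover have "set (sorted_list_of_set I) \<subseteq> I"
    by (cases "finite I") auto
  ultimately show ?thesis
    unfolding comp_over_def by blast
qed

lemma comp_over_insert: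
  assumes commute: "\<And>i j. i \<in> K \<Longrightarrow> j \<in> K \<Longrightarrow> f i \<circ> f j = f j \<circ> f i"
    and I: "finite I" "I \<subseteq> K" and i: "i \<in> K" "i \<notin> I"
  shows "comp_over f (insert i I) = f i \<circ> comp_over f I"
proof -
  interpret Finite_Set.comp_fun_commute_on K "\<lambda>i h. f i \<circ> h"
    by unfold_locales (auto simp: fun_eq_iff commute comp_assoc[symmetric])
  have fold_eq: "comp_over f J = Finite_Set.fold (\<lambda>i h. f i \<circ> h) id J" if "finite J" "J \<subseteq> K" for J
    using fold_set_fold_remdups[of "sorted_list_of_set J" id] that
    by (simp add: comp_over_def distinct_remdups_id)
  show ?thesis
    using I i by (simp add: fold_eq)
qed

lemma subset_twist_closure: "S \<subseteq> twist_closure f k S"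
  unfolding twist_closure_def by (force intro!: bexI[of _ "{}"])

lemma image_subset_twist_closure: "i \<in> {1..k} \<Longrightarrow> f i ` S \<subseteq> twist_closure f k S"
  unfolding twist_closure_def by (force intro!: bexI[of _ "{i}"])

lemma card_twist_closure_le:
  assumes "finite S"
  shows "card (twist_closure f k S) \<le> 2 ^ k * card S"
proof -
  have "card (twist_closure f k S) \<le> (\<Sum>I\<in>Pow {1..k}. card (comp_over f I ` S))"
    unfolding twist_closure_def by (rule card_UN_le) simp
  also have "\<dots> \<le> (\<Sum>I\<in>Pow {1..k}. card S)"
    by (intro sum_mono card_image_le assms)
  finally show ?thesis
    by (simp add: card_Pow)
qed

locale commuting_involutions = group G for G :: "('a, 'b) monoid_scheme" (structure) +
  fixes \<sigma> :: "nat \<Rightarrow> 'a \<Rightarrow> 'a" and k :: nat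
  assumes \<sigma>_hom: "i \<in> {1..k} \<Longrightarrow> \<sigma> i \<in> hom G G"
    and \<sigma>_involutive: "i \<in> {1..k} \<Longrightarrow> x \<in> carrier G \<Longrightarrow> \<sigma> i (\<sigma> i x) = x"
    and \<sigma>_commute: "i \<in> {1..k} \<Longrightarrow> j \<in> {1..k} \<Longrightarrow> x \<in> carrier G \<Longrightarrow> \<sigma> i (\<sigma> j x) = \<sigma> j (\<sigma> i x)"
begin

lemma comp_over_\<sigma>_hom: "I \<subseteq> {1..k} \<Longrightarrow> comp_over \<sigma> I \<in> hom G G"
  using \<sigma>_hom by (blast intro: comp_over_hom)

lemma \<sigma>_comp_over:
  assumes I: "I \<subseteq> {1..k}" and i: "i \<in> {1..k}" and x: "x \<in> carrier G"
  shows "\<sigma> i (comp_over \<sigma> I x) = comp_over \<sigma> (if i \<in> I then I - {i} else insert i I) x"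
proof -
  \<comment> \<open>The \<open>\<sigma> j\<close> commute only on the carrier; extended by the identity outside it,
    they commute as functions, which is what folding over a set requires.\<close>
  define \<tau> where "\<tau> j y = (if y \<in> carrier G then \<sigma> j y else y)" for j y
  have \<sigma>_carrier: "\<sigma> j y \<in> carrier G" if "j \<in> {1..k}" "y \<in> carrier G" for j y
    using hom_in_carrier[OF \<sigma>_hom] that .
  have \<tau>_commute: "\<tau> j \<circ> \<tau> l = \<tau> l \<circ> \<tau> j" if "j \<in> {1..k}" "l \<in> {1..k}" for j l
    using that by (auto simp: \<tau>_def fun_eq_iff \<sigma>_carrier \<sigma>_commute)
  have \<tau>_\<sigma>: "comp_over \<tau> J y = comp_over \<sigma> J y" if "J \<subseteq> {1..k}" "y \<in> carrier G" for J y
    using that \<sigma>_carrier by (intro comp_over_cong_on[where C = "carrier G"]) (auto simp: \<tau>_def)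
  have comp_carrier: "comp_over \<sigma> J y \<in> carrier G" if "J \<subseteq> {1..k}" "y \<in> carrier G" for J y
    using hom_in_carrier[OF comp_over_\<sigma>_hom] that .
  have fin: "finite I"
    using I finite_subset by blast
  have "\<sigma> i (comp_over \<sigma> I x) = \<tau> i (comp_over \<tau> I x)"
    using I x comp_carrier by (simp add: \<tau>_\<sigma> \<tau>_def)
  also have "\<dots> = comp_over \<tau> (if i \<in> I then I - {i} else insert i I) x"
  proof (cases "i \<in> I")
    case True
    have "comp_over \<tau> (insert i (I - {i})) = \<tau> i \<circ> comp_over \<tau> (I - {i})"
      using fin I i by (intro comp_over_insert[where K = "{1..k}"] \<tau>_commute) auto
    then have "comp_over \<tau> I = \<tau> i \<circ> comp_over \<tau> (I - {i})"
      using True by (simp add: insert_absorb)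
    moreover have "\<tau> i (\<tau> i y) = y" for y
      using i by (simp add: \<tau>_def \<sigma>_carrier \<sigma>_involutive)
    ultimately show ?thesis
      using True by simp
  next
    case False
    have "comp_over \<tau> (insert i I) = \<tau> i \<circ> comp_over \<tau> I"
      using fin I i False by (intro comp_over_insert[where K = "{1..k}"] \<tau>_commute) auto
    then show ?thesis
      using False by simp
  qed
  also have "\<dots> = comp_over \<sigma> (if i \<in> I then I - {i} else insert i I) x"
    using I i x by (simp add: \<tau>_\<sigma> subset_insertI2 Diff_subset [THEN subset_trans])
  finally show ?thesis .
qed

lemma twist_closure_subset: "S \<subseteq> carrier G \<Longrightarrow> twist_closure \<sigma> k S \<subseteq> carrier G"
  unfolding twist_closure_def using hom_in_carrier[OF comp_over_\<sigma>_hom] by blast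

lemma twist_closure_\<sigma>_closed:
  assumes "S \<subseteq> carrier G" and i: "i \<in> {1..k}"
  shows "\<sigma> i ` twist_closure \<sigma> k S \<subseteq> twist_closure \<sigma> k S"
proof
  fix t assume "t \<in> \<sigma> i ` twist_closure \<sigma> k S"
  then obtain I s where I: "I \<subseteq> {1..k}" and s: "s \<in> S" and t: "t = \<sigma> i (comp_over \<sigma> I s)"
    unfolding twist_closure_def by blast
  have "(if i \<in> I then I - {i} else insert i I) \<subseteq> {1..k}"
    using I i by auto
  then show "t \<in> twist_closure \<sigma> k S"
    unfolding t \<sigma>_comp_over[OF I i subsetD[OF assms(1) s]] twist_closure_def using s by blast
qed

lemma twist_closure_inv_closed:
  assumes "S \<subseteq> carrier G" and S_inv: "\<And>s. s \<in> S \<Longrightarrow> inv s \<in> S"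
    and t: "t \<in> twist_closure \<sigma> k S"
  shows "inv t \<in> twist_closure \<sigma> k S"
proof -
  obtain I s where I: "I \<subseteq> {1..k}" and s: "s \<in> S" and t: "t = comp_over \<sigma> I s"
    using t unfolding twist_closure_def by blast
  interpret group_hom G G "comp_over \<sigma> I"
    using comp_over_\<sigma>_hom[OF I] by unfold_locales
  have "inv t = comp_over \<sigma> I (inv s)"
    using t s assms(1) by auto
  then show ?thesis
    unfolding twist_closure_def using I S_inv[OF s] by blast
qed

lemma twist_closure_spectra_equal_up_to_sign:
  assumes "finite (carrier G)" "S \<subseteq> carrier G" "i \<in> {1..k}" "j \<in> {1..k}"
  shows "equal_up_to_sign (eigenvalues_mset (cayley_adj_matrix G (twist_closure \<sigma> k S) (\<sigma> i)))
           (eigenvalues_mset (cayley_adj_matrix G (twist_closure \<sigma> k S) (\<sigma> j)))"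
  using assms twist_closure_subset twist_closure_\<sigma>_closed \<sigma>_hom \<sigma>_involutive
  by (intro eigenvalues_twisted_cayley_equal_up_to_sign) auto

end

lemma card_cayley_neighbours_le:
  assumes "finite T"
  shows "card {y \<in> V. cayley_adj G T \<tau> x y} \<le> card T"
proof -
  have "{y \<in> V. cayley_adj G T \<tau> x y} \<subseteq> (\<lambda>t. \<tau> (x \<otimes>\<^bsub>G\<^esub> t)) ` T"
    by (auto simp: cayley_adj_def)
  then have "card {y \<in> V. cayley_adj G T \<tau> x y} \<le> card ((\<lambda>t. \<tau> (x \<otimes>\<^bsub>G\<^esub> t)) ` T)"
    using assms by (intro card_mono) auto
  also have "\<dots> \<le> card T"
    using assms by (rule card_image_le)
  finally show ?thesis .
qed

context group
begin

lemma card_generators_le_degree: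
  assumes "undirected_bounded_degree (carrier G) (cayley_adj G S id) d" and "S \<subseteq> carrier G"
  shows "card S \<le> d"
proof -
  have "{y \<in> carrier G. cayley_adj G S id \<one> y} = S"
    using assms(2) by (force simp: cayley_adj_def)
  then show ?thesis
    using assms(1) one_closed unfolding undirected_bounded_degree_def by metis
qed

lemma twisted_cayley_adj_sym:
  assumes \<sigma>_hom: "\<sigma> \<in> hom G G" and \<sigma>_inv: "\<And>x. x \<in> carrier G \<Longrightarrow> \<sigma> (\<sigma> x) = x"
    and T: "T \<subseteq> carrier G" and T_inv: "\<And>t. t \<in> T \<Longrightarrow> inv t \<in> T" and \<sigma>_T: "\<sigma> ` T \<subseteq> T"
    and adj: "cayley_adj G T \<sigma> x y"
  shows "cayley_adj G T \<sigma> y x"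
proof -
  obtain t where x: "x \<in> carrier G" and t: "t \<in> T" and y: "y = \<sigma> (x \<otimes> t)"
    using adj by (auto simp: cayley_adj_def)
  have t_carrier: "t \<in> carrier G"
    using t T by blast
  then have y_carrier: "y \<in> carrier G"
    using x y hom_in_carrier[OF \<sigma>_hom] by simp
  \<comment> \<open>The edge back from \<open>y\<close> is labelled by \<open>\<sigma> (inv t)\<close>.\<close>
  have "\<sigma> (y \<otimes> \<sigma> (inv t)) = \<sigma> y \<otimes> \<sigma> (\<sigma> (inv t))"
    using y_carrier t_carrier hom_in_carrier[OF \<sigma>_hom] hom_mult[OF \<sigma>_hom] by simp
  also have "\<dots> = x"
    using x t_carrier \<sigma>_inv by (simp add: y m_assoc)
  finally show ?thesis
    using y_carrier t T_inv \<sigma>_T unfolding cayley_adj_def by blast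
qed

lemma twisted_cayley_undirected_bounded_degree:
  assumes fin: "finite (carrier G)" and T: "T \<subseteq> carrier G"
    and T_inv: "\<And>t. t \<in> T \<Longrightarrow> inv t \<in> T" and \<sigma>_T: "\<sigma> ` T \<subseteq> T"
    and \<sigma>_hom: "\<sigma> \<in> hom G G" and \<sigma>_inv: "\<And>x. x \<in> carrier G \<Longrightarrow> \<sigma> (\<sigma> x) = x"
    and card_T: "card T \<le> D"
  shows "undirected_bounded_degree (carrier G) (cayley_adj G T \<sigma>) D"
  unfolding undirected_bounded_degree_def
proof (intro conjI ballI allI impI)
  fix x y
  show "cayley_adj G T \<sigma> x y = cayley_adj G T \<sigma> y x"
    using twisted_cayley_adj_sym[OF \<sigma>_hom \<sigma>_inv T T_inv \<sigma>_T] by blast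
  assume "cayley_adj G T \<sigma> x y"
  then show "x \<in> carrier G" "y \<in> carrier G"
    using T hom_in_carrier[OF \<sigma>_hom] by (auto simp: cayley_adj_def)
next
  fix x
  show "card {y \<in> carrier G. cayley_adj G T \<sigma> x y} \<le> D"
    using card_cayley_neighbours_le[OF finite_subset[OF T fin]] card_T le_trans by blast
qed (rule fin)

end

section \<open>Expansion of twisted Cayley graphs\<close>

context group
begin

lemma l_coset_eq_image: "g <# U = (\<lambda>x. g \<otimes> x) ` U"
  by (auto simp: l_coset_def)

lemma card_l_coset:
  assumes "g \<in> carrier G" "U \<subseteq> carrier G"
  shows "card (g <# U) = card U"
  unfolding l_coset_eq_image using assms by (meson card_image inj_on_cmult inj_on_subset)

lemma card_set_mult_le:
  assumes "finite U" "finite V"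
  shows "card (U <#> V) \<le> card U * card V"
proof -
  have "U <#> V = (\<lambda>(u, v). u \<otimes> v) ` (U \<times> V)"
    by (auto simp: set_mult_def)
  then have "card (U <#> V) \<le> card (U \<times> V)"
    using assms by (metis card_image_le finite_cartesian_product)
  then show ?thesis
    by (simp add: card_cartesian_product)
qed

lemma card_Int_l_coset:
  assumes A: "A \<subseteq> carrier G" and g: "g \<in> carrier G"
  shows "card (A \<inter> (g <# A)) = card {(x, y) \<in> A \<times> A. x \<otimes> inv y = g}"
proof -
  have quotient_iff: "x \<otimes> inv y = g \<longleftrightarrow> x = g \<otimes> y" "x \<otimes> inv y = g \<longleftrightarrow> y = inv g \<otimes> x"
    if "x \<in> A" "y \<in> A" for x y
  proof -
    have "x \<in> carrier G" "y \<in> carrier G"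
      using that A by auto
    then show "x \<otimes> inv y = g \<longleftrightarrow> x = g \<otimes> y" "x \<otimes> inv y = g \<longleftrightarrow> y = inv g \<otimes> x"
      using g by (simp_all add: inv_solve_right' inv_solve_left)
  qed
  have cancel: "inv g \<otimes> (g \<otimes> y) = y" if "y \<in> A" for y
    using that A g by (auto simp: m_assoc[symmetric])
  have "bij_betw fst {(x, y) \<in> A \<times> A. x \<otimes> inv y = g} (A \<inter> (g <# A))"
  proof (rule bij_betwI[where g = "\<lambda>x. (x, inv g \<otimes> x)"])
    show "fst \<in> {(x, y) \<in> A \<times> A. x \<otimes> inv y = g} \<rightarrow> A \<inter> (g <# A)"
    proof
      fix p assume "p \<in> {(x, y) \<in> A \<times> A. x \<otimes> inv y = g}"
      then obtain x y where p: "p = (x, y)" "x \<in> A" "y \<in> A" and "x \<otimes> inv y = g"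
        by blast
      then have "x = g \<otimes> y"
        using quotient_iff(1) by blast
      then show "fst p \<in> A \<inter> (g <# A)"
        using p by (auto simp: l_coset_eq_image)
    qed
    show "(\<lambda>x. (x, inv g \<otimes> x)) \<in> A \<inter> (g <# A) \<rightarrow> {(x, y) \<in> A \<times> A. x \<otimes> inv y = g}"
      by (auto simp: l_coset_eq_image quotient_iff(1) cancel)
    show "(fst p, inv g \<otimes> fst p) = p" if mem: "p \<in> {(x, y) \<in> A \<times> A. x \<otimes> inv y = g}" for p
    proof -
      obtain x y where p: "p = (x, y)" "x \<in> A" "y \<in> A" and "x \<otimes> inv y = g"
        using mem by blast
      then have "y = inv g \<otimes> x"
        using quotient_iff(2) by blast
      then show ?thesis
        using p by simp
    qed
  qed simp
  then show ?thesis
    by (rule bij_betw_same_card[symmetric])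
qed

lemma sum_card_Int_l_coset:
  assumes A: "finite A" "A \<subseteq> carrier G" and Y: "finite Y" "Y \<subseteq> carrier G"
  shows "(\<Sum>g\<in>Y. card (A \<inter> (g <# A))) = card {(x, y) \<in> A \<times> A. x \<otimes> inv y \<in> Y}"
proof -
  have "(\<Sum>g\<in>Y. card (A \<inter> (g <# A))) = (\<Sum>g\<in>Y. card {(x, y) \<in> A \<times> A. x \<otimes> inv y = g})"
    using A Y by (intro sum.cong) (auto simp: card_Int_l_coset)
  also have "\<dots> = card (\<Union>g\<in>Y. {(x, y) \<in> A \<times> A. x \<otimes> inv y = g})"
    using A Y by (intro card_UN_disjoint[symmetric]) (auto intro: finite_subset[of _ "A \<times> A"])
  also have "(\<Union>g\<in>Y. {(x, y) \<in> A \<times> A. x \<otimes> inv y = g}) = {(x, y) \<in> A \<times> A. x \<otimes> inv y \<in> Y}"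
    by blast
  finally show ?thesis .
qed

lemma card_Int_l_coset_inv:
  assumes A: "A \<subseteq> carrier G" and g: "g \<in> carrier G"
  shows "card (A \<inter> (inv g <# A)) = card (A \<inter> (g <# A))"
proof -
  have swap: "x \<otimes> inv y = inv g \<longleftrightarrow> y \<otimes> inv x = g" if "x \<in> carrier G" "y \<in> carrier G" for x y
    using that g by (metis inv_closed inv_inv inv_mult_group m_closed)
  have "bij_betw (\<lambda>(x, y). (y, x))
      {(x, y) \<in> A \<times> A. x \<otimes> inv y = inv g} {(x, y) \<in> A \<times> A. x \<otimes> inv y = g}"
    using A swap by (intro bij_betwI[where g = "\<lambda>(x, y). (y, x)"]) auto
  then show ?thesis
    using A g by (simp add: card_Int_l_coset bij_betw_same_card)
qed

lemma Int_l_coset_set_mult_subset: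
  assumes U: "U \<subseteq> carrier G" and S: "S \<subseteq> carrier G" and g: "g \<in> carrier G"
    and closed: "U <#> S \<subseteq> V \<union> W"
  shows "(U \<inter> (g <# U)) <#> S \<subseteq> (V \<inter> (g <# V)) \<union> W \<union> (g <# W)"
proof
  fix z assume "z \<in> (U \<inter> (g <# U)) <#> S"
  then obtain u s where u: "u \<in> U" "u \<in> g <# U" and s: "s \<in> S" and z: "z = u \<otimes> s"
    by (auto simp: set_mult_def)
  obtain u' where u': "u' \<in> U" "u = g \<otimes> u'"
    using u by (auto simp: l_coset_eq_image)
  have "u' \<in> carrier G" "s \<in> carrier G"
    using u' U S s by auto
  then have "z = g \<otimes> (u' \<otimes> s)"
    using z u' g by (simp add: m_assoc)
  moreover have "u' \<otimes> s \<in> V \<union> W" "u \<otimes> s \<in> V \<union> W"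
    using closed u u' s by (auto simp: set_mult_def)
  ultimately show "z \<in> (V \<inter> (g <# V)) \<union> W \<union> (g <# W)"
    using z by (auto simp: l_coset_eq_image)
qed

lemma image_l_coset:
  assumes "h \<in> hom G G" "g \<in> carrier G" "U \<subseteq> carrier G"
  shows "h ` (g <# U) = h g <# (h ` U)"
  using assms by (force simp: l_coset_eq_image hom_mult image_image)

lemma large_subgroup_mult_inv_mem_iff:
  assumes fin: "finite (carrier G)" and H: "subgroup H G"
    and large: "card (carrier G) < 3 * card H"
    and x: "x \<in> carrier G" and y: "y \<in> carrier G"
  shows "x \<otimes> inv y \<in> H \<longleftrightarrow> (x \<in> H \<longleftrightarrow> y \<in> H)"
proof (cases "y \<in> H")
  case True
  have "x \<otimes> inv y \<otimes> y = x"
    using x y by (simp add: m_assoc)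
  then show ?thesis
    using True subgroup.m_closed[OF H] subgroup.m_inv_closed[OF H True] by metis
next
  case y_notin: False
  show ?thesis
  proof (cases "x \<in> H")
    case True
    have "inv (x \<otimes> inv y) \<otimes> x = y"
      using x y by (simp add: inv_mult_group m_assoc)
    then show ?thesis
      using True y_notin subgroup.m_closed[OF H] subgroup.m_inv_closed[OF H] by metis
  next
    case x_notin: False
    \<comment> \<open>By Lagrange \<open>H\<close> has index at most two, so the cosets \<open>H #> x\<close> and \<open>H #> y\<close>,
      both different from \<open>H\<close>, coincide.\<close>
    have "card (rcosets H) * card H < 3 * card H"
      using lagrange[OF H] large by (simp add: order_def)
    then have index: "card (rcosets H) \<le> 2"
      by simp
    have H_carrier: "H \<subseteq> carrier G"
      using subgroup.subset[OF H] .
    have cosets: "{H, H #> x, H #> y} \<subseteq> rcosets H"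
      using rcosetsI[OF H_carrier x] rcosetsI[OF H_carrier y] rcosetsI[OF H_carrier one_closed]
        coset_mult_one[OF H_carrier] by auto
    have finite_cosets: "finite (rcosets H)"
      using fin rcosets_subset_PowG[OF H] finite_subset by blast
    have x_coset: "H #> x \<noteq> H" and y_coset: "H #> y \<noteq> H"
      using rcos_self[OF x H] rcos_self[OF y H] x_notin y_notin by auto
    have "H #> x = H #> y"
    proof (rule ccontr)
      assume "H #> x \<noteq> H #> y"
      then have "card {H, H #> x, H #> y} = 3"
        using x_coset y_coset by auto
      then show False
        using card_mono[OF finite_cosets cosets] index by simp
    qed
    then have "x \<otimes> inv y \<in> H"
      using subgroup.rcos_module_imp[OF H is_group y] rcos_self[OF x H] by auto
    then show ?thesis
      using x_notin y_notin by blast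
  qed
qed

end

locale cayley_expander = group G for G :: "('a, 'b) monoid_scheme" (structure) +
  fixes S :: "'a set" and d :: nat and \<epsilon> :: real
  assumes finite_carrier: "finite (carrier G)"
    and S_subset: "S \<subseteq> carrier G"
    and S_inv_closed: "\<And>s. s \<in> S \<Longrightarrow> inv s \<in> S"
    and card_S: "card S \<le> d"
    and \<epsilon>_pos: "0 < \<epsilon>"
    and expander: "vertex_expander (carrier G) (cayley_adj G S id) \<epsilon>"
begin

lemma finite_subset_carrier: "X \<subseteq> carrier G \<Longrightarrow> finite X"
  using finite_carrier finite_subset by blast

lemma expansion:
  assumes X: "X \<subseteq> carrier G" and half: "real (card X) \<le> real (card (carrier G)) / 2"
  shows "\<epsilon> * card X \<le> card ((X <#> S) - X)"
proof -
  have "vertex_boundary (carrier G) (cayley_adj G S id) X = (X <#> S) - X"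
    using X S_subset by (auto simp: vertex_boundary_def cayley_adj_def set_mult_def)
  then show ?thesis
    using expander X half unfolding vertex_expander_def by auto
qed

lemma nearly_closed_small_or_cosmall:
  assumes X: "X \<subseteq> carrier G" and F: "F \<subseteq> carrier G" and closed: "X <#> S \<subseteq> X \<union> F"
  shows "\<epsilon> * card X \<le> (d + 1) * card F \<or> \<epsilon> * card (carrier G - X) \<le> (d + 1) * card F"
proof (cases "real (card X) \<le> real (card (carrier G)) / 2")
  case True
  have "card ((X <#> S) - X) \<le> card F"
    using closed finite_subset_carrier[OF F] by (intro card_mono) auto
  then have "\<epsilon> * card X \<le> card F"
    using expansion[OF X True] by (meson of_nat_le_iff order_trans)
  moreover have "real (card F) \<le> (d + 1) * card F"
    by (simp add: algebra_simps)
  ultimately show ?thesis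
    by linarith
next
  case False
  let ?Y = "carrier G - X"
  have "card ?Y = card (carrier G) - card X"
    using X finite_carrier by (simp add: card_Diff_subset finite_subset_carrier)
  moreover have "card X \<le> card (carrier G)"
    using X finite_carrier by (rule card_mono[rotated])
  ultimately have half: "real (card ?Y) \<le> real (card (carrier G)) / 2"
    using False by auto
  \<comment> \<open>As \<open>S\<close> is symmetric, the boundary of the complement lies in \<open>F <#> S\<close>.\<close>
  have "(?Y <#> S) - ?Y \<subseteq> F <#> S"
  proof
    fix z assume "z \<in> (?Y <#> S) - ?Y"
    then obtain y s where y: "y \<in> carrier G" "y \<notin> X" and s: "s \<in> S" and z: "z = y \<otimes> s" "z \<in> X"
      using S_subset by (auto simp: set_mult_def)
    have "y = z \<otimes> inv s"
      using y s z S_subset by (auto simp: m_assoc)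
    then have "y \<in> X <#> S"
      using z S_inv_closed[OF s] by (auto simp: set_mult_def)
    then have "y \<in> F"
      using closed y by blast
    then show "z \<in> F <#> S"
      using s z by (auto simp: set_mult_def)
  qed
  then have "card ((?Y <#> S) - ?Y) \<le> card (F <#> S)"
    using finite_subset_carrier[OF F] finite_subset_carrier[OF S_subset]
    by (intro card_mono) (auto simp: set_mult_def)
  also have "\<dots> \<le> card F * card S"
    using finite_subset_carrier[OF F] finite_subset_carrier[OF S_subset] by (rule card_set_mult_le)
  also have "\<dots> \<le> card F * d"
    using card_S by (rule mult_le_mono2)
  finally have "\<epsilon> * card ?Y \<le> card F * d"
    using expansion[OF _ half] by (meson Diff_subset of_nat_le_iff order_trans)
  moreover have "real (card F * d) \<le> (d + 1) * card F"
    by (simp add: algebra_simps)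
  ultimately show ?thesis
    by linarith
qed

end

locale twisted_cayley_expander = cayley_expander +
  fixes T :: "'a set" and \<sigma> :: "'a \<Rightarrow> 'a"
  assumes \<sigma>_hom: "\<sigma> \<in> hom G G"
    and \<sigma>_involutive: "\<And>x. x \<in> carrier G \<Longrightarrow> \<sigma> (\<sigma> x) = x"
    and T_subset: "T \<subseteq> carrier G"
    and S_subset_T: "S \<subseteq> T"
    and \<sigma>_S_subset_T: "\<sigma> ` S \<subseteq> T"
begin

lemma \<sigma>_carrier: "x \<in> carrier G \<Longrightarrow> \<sigma> x \<in> carrier G"
  using \<sigma>_hom by (rule hom_in_carrier)

lemma \<sigma>_mult: "x \<in> carrier G \<Longrightarrow> y \<in> carrier G \<Longrightarrow> \<sigma> (x \<otimes> y) = \<sigma> x \<otimes> \<sigma> y"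
  using \<sigma>_hom by (rule hom_mult)

lemma inj_on_\<sigma>: "inj_on \<sigma> (carrier G)"
  by (rule inj_on_inverseI[where g = \<sigma>]) (rule \<sigma>_involutive)

lemma card_image_\<sigma>: "X \<subseteq> carrier G \<Longrightarrow> card (\<sigma> ` X) = card X"
  using inj_on_\<sigma> by (meson card_image inj_on_subset)

lemma twisted_neighbours:
  assumes A: "A \<subseteq> carrier G"
  shows "\<sigma> ` (A <#> S) \<subseteq> A \<union> vertex_boundary (carrier G) (cayley_adj G T \<sigma>) A"
    and "\<sigma> ` A <#> S \<subseteq> A \<union> vertex_boundary (carrier G) (cayley_adj G T \<sigma>) A"
proof -
  have neighbour: "\<sigma> (a \<otimes> t) \<in> A \<union> vertex_boundary (carrier G) (cayley_adj G T \<sigma>) A"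
    if "a \<in> A" "t \<in> T" for a t
  proof -
    have "a \<in> carrier G" "a \<otimes> t \<in> carrier G"
      using that A T_subset by auto
    then show ?thesis
      using that \<sigma>_carrier by (auto simp: vertex_boundary_def cayley_adj_def)
  qed
  show "\<sigma> ` (A <#> S) \<subseteq> A \<union> vertex_boundary (carrier G) (cayley_adj G T \<sigma>) A"
    using neighbour S_subset_T by (auto simp: set_mult_def)
  have "\<sigma> a \<otimes> s = \<sigma> (a \<otimes> \<sigma> s)" if "a \<in> A" "s \<in> S" for a s
  proof -
    have "a \<in> carrier G" "s \<in> carrier G"
      using that A S_subset by auto
    then show ?thesis
      by (simp add: \<sigma>_mult \<sigma>_carrier \<sigma>_involutive)
  qed
  then show "\<sigma> ` A <#> S \<subseteq> A \<union> vertex_boundary (carrier G) (cayley_adj G T \<sigma>) A"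
    using neighbour \<sigma>_S_subset_T by (force simp: set_mult_def)
qed

end

locale twisted_small_boundary = twisted_cayley_expander +
  fixes A :: "'a set"
  assumes A_subset: "A \<subseteq> carrier G"
    and A_half: "real (card A) \<le> real (card (carrier G)) / 2"
    and small_boundary:
      "100 * real (d + 1) * card (vertex_boundary (carrier G) (cayley_adj G T \<sigma>) A) < \<epsilon> * card A"
begin

definition E :: "'a set"
  where "E = vertex_boundary (carrier G) (cayley_adj G T \<sigma>) A"

definition B :: "'a set"
  where "B = \<sigma> ` A"

definition \<eta> :: real
  where "\<eta> = real (d + 1) * card E"

definition overlap :: "'a \<Rightarrow> nat"
  where "overlap g = card (A \<inter> (g <# A))"

definition overlap_set :: "'a \<Rightarrow> 'a set"
  where "overlap_set g = (A \<inter> (g <# A)) \<union> (B \<inter> (g <# B))"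

definition stabiliser :: "'a set"
  where "stabiliser = {g \<in> carrier G. 4 * \<eta> < \<epsilon> * overlap g}"

lemma E_subset: "E \<subseteq> carrier G"
  by (auto simp: E_def vertex_boundary_def)

lemma B_subset: "B \<subseteq> carrier G"
  using A_subset \<sigma>_carrier by (auto simp: B_def)

lemma finite_A: "finite A"
  using A_subset by (rule finite_subset_carrier)

lemma finite_B: "finite B"
  using B_subset by (rule finite_subset_carrier)

lemma card_B: "card B = card A"
  unfolding B_def using A_subset by (rule card_image_\<sigma>)

lemma \<eta>_nonneg: "0 \<le> \<eta>"
  by (simp add: \<eta>_def)

lemma \<eta>_small: "100 * \<eta> < \<epsilon> * card A"
  using small_boundary by (simp add: \<eta>_def E_def algebra_simps)

lemma A_mult_S: "A <#> S \<subseteq> B \<union> \<sigma> ` E"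
proof
  fix x assume x: "x \<in> A <#> S"
  then have "x \<in> carrier G"
    using A_subset S_subset setmult_subset_G by blast
  moreover have "\<sigma> x \<in> A \<union> E"
    using twisted_neighbours(1)[OF A_subset] x unfolding E_def by blast
  ultimately show "x \<in> B \<union> \<sigma> ` E"
    unfolding B_def using \<sigma>_involutive by (metis Un_iff image_eqI)
qed

lemma B_mult_S: "B <#> S \<subseteq> A \<union> E"
  using twisted_neighbours(2)[OF A_subset] unfolding B_def E_def .

lemma nearly_closed_bound:
  assumes Y: "Y \<subseteq> carrier G" and F: "F \<subseteq> carrier G" and closed: "Y <#> S \<subseteq> Y \<union> F"
    and card_F: "card F \<le> c * card E"
  shows "\<epsilon> * card Y \<le> c * \<eta> \<or> \<epsilon> * card (carrier G - Y) \<le> c * \<eta>"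
proof -
  have "real (d + 1) * card F \<le> real (d + 1) * (c * card E)"
    using card_F by (intro mult_left_mono) (simp_all flip: of_nat_mult)
  then have "(d + 1) * card F \<le> c * \<eta>"
    by (simp add: \<eta>_def algebra_simps)
  then show ?thesis
    using nearly_closed_small_or_cosmall[OF Y F closed] by linarith
qed

lemma card_E_Un_\<sigma>_E: "card (E \<union> \<sigma> ` E) \<le> 2 * card E"
  using card_Un_le[of E "\<sigma> ` E"] card_image_\<sigma>[OF E_subset] by simp

lemma E_Un_\<sigma>_E_subset: "E \<union> \<sigma> ` E \<subseteq> carrier G"
  using E_subset \<sigma>_carrier by blast

lemma card_A_Int_B: "\<epsilon> * card (A \<inter> B) \<le> 2 * \<eta>"
proof -
  have "(A \<inter> B) <#> S \<subseteq> (A <#> S) \<inter> (B <#> S)"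
    by (simp add: mono_set_mult)
  also have "\<dots> \<subseteq> (A \<inter> B) \<union> (E \<union> \<sigma> ` E)"
    using A_mult_S B_mult_S by blast
  finally have "\<epsilon> * card (A \<inter> B) \<le> 2 * \<eta> \<or> \<epsilon> * card (carrier G - A \<inter> B) \<le> 2 * \<eta>"
    using nearly_closed_bound[OF _ E_Un_\<sigma>_E_subset _ card_E_Un_\<sigma>_E] A_subset
    by (simp add: le_infI1)
  moreover have "card A \<le> card (carrier G - A \<inter> B)"
  proof -
    have "card (carrier G - A) \<le> card (carrier G - A \<inter> B)"
      using finite_carrier by (intro card_mono) auto
    moreover have "card (carrier G - A) = card (carrier G) - card A"
      using A_subset finite_A by (simp add: card_Diff_subset)
    ultimately show ?thesis
      using A_half by linarith
  qed
  then have "\<epsilon> * card A \<le> \<epsilon> * card (carrier G - A \<inter> B)"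
    using \<epsilon>_pos by simp
  ultimately show ?thesis
    using \<eta>_small \<eta>_nonneg by linarith
qed

lemma card_carrier_bound: "\<epsilon> * card (carrier G) \<le> 2 * (\<epsilon> * card A) + 2 * \<eta>"
proof -
  have "(A \<union> B) <#> S = (A <#> S) \<union> (B <#> S)"
    by (auto simp: set_mult_def)
  also have "\<dots> \<subseteq> (A \<union> B) \<union> (E \<union> \<sigma> ` E)"
    using A_mult_S B_mult_S by blast
  finally have "\<epsilon> * card (A \<union> B) \<le> 2 * \<eta> \<or> \<epsilon> * card (carrier G - (A \<union> B)) \<le> 2 * \<eta>"
    using nearly_closed_bound[OF _ E_Un_\<sigma>_E_subset _ card_E_Un_\<sigma>_E] A_subset B_subset by simp
  moreover have "\<epsilon> * card A \<le> \<epsilon> * card (A \<union> B)"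
    using \<epsilon>_pos finite_A finite_B by (simp add: card_mono)
  moreover have "\<epsilon> * card (A \<union> B) \<le> 2 * (\<epsilon> * card A)"
    using card_Un_le[of A B] card_B \<epsilon>_pos by simp
  moreover have "\<epsilon> * card (carrier G - (A \<union> B)) = \<epsilon> * card (carrier G) - \<epsilon> * card (A \<union> B)"
    using A_subset B_subset finite_A finite_B
    by (simp add: card_Diff_subset card_mono finite_carrier of_nat_diff right_diff_distrib)
  ultimately show ?thesis
    using \<eta>_small \<eta>_nonneg by linarith
qed

lemma overlap_set_subset: "g \<in> carrier G \<Longrightarrow> overlap_set g \<subseteq> carrier G"
  using A_subset B_subset by (auto simp: overlap_set_def)

lemma overlap_set_bound:
  assumes g: "g \<in> carrier G"
  shows "\<epsilon> * card (overlap_set g) \<le> 4 * \<eta> \<or> \<epsilon> * card (carrier G - overlap_set g) \<le> 4 * \<eta>"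
proof -
  let ?F = "(E \<union> \<sigma> ` E) \<union> (g <# (E \<union> \<sigma> ` E))"
  have "overlap_set g <#> S = ((A \<inter> (g <# A)) <#> S) \<union> ((B \<inter> (g <# B)) <#> S)"
    by (auto simp: overlap_set_def set_mult_def)
  also have "\<dots> \<subseteq> overlap_set g \<union> ?F"
    using Int_l_coset_set_mult_subset[OF A_subset S_subset g A_mult_S]
      Int_l_coset_set_mult_subset[OF B_subset S_subset g B_mult_S]
    by (auto simp: overlap_set_def l_coset_eq_image)
  finally have closed: "overlap_set g <#> S \<subseteq> overlap_set g \<union> ?F" .
  have F_subset: "?F \<subseteq> carrier G"
    using E_Un_\<sigma>_E_subset l_coset_subset_G[OF E_Un_\<sigma>_E_subset g] by blast
  have "card ?F \<le> card (E \<union> \<sigma> ` E) + card (g <# (E \<union> \<sigma> ` E))"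
    by (rule card_Un_le)
  also have "\<dots> \<le> 4 * card E"
    using card_l_coset[OF g E_Un_\<sigma>_E_subset] card_E_Un_\<sigma>_E by simp
  finally have card_F: "card ?F \<le> 4 * card E" .
  show ?thesis
    using nearly_closed_bound[OF overlap_set_subset[OF g] F_subset closed card_F] by simp
qed

lemma overlap_le_card_A: "overlap g \<le> card A"
  unfolding overlap_def using finite_A by (intro card_mono) auto

lemma overlap_le_card_overlap_set: "g \<in> carrier G \<Longrightarrow> overlap g \<le> card (overlap_set g)"
  unfolding overlap_def
  using finite_subset_carrier[OF overlap_set_subset]
  by (intro card_mono) (auto simp: overlap_set_def)

lemma card_A_Diff_l_coset: "real (card (A - (g <# A))) = real (card A) - overlap g"
  using card_Int_Diff[OF finite_A, of "g <# A"] by (simp add: overlap_def)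

lemma overlap_lower_bound:
  assumes g: "g \<in> carrier G" and large: "\<epsilon> * card (carrier G - overlap_set g) \<le> 4 * \<eta>"
  shows "\<epsilon> * card A - 6 * \<eta> \<le> \<epsilon> * overlap g"
proof -
  have "A - (g <# A) \<subseteq> (carrier G - overlap_set g) \<union> (A \<inter> B)"
    using A_subset by (auto simp: overlap_set_def)
  then have "card (A - (g <# A)) \<le> card ((carrier G - overlap_set g) \<union> (A \<inter> B))"
    using finite_carrier finite_A by (intro card_mono) auto
  also have "\<dots> \<le> card (carrier G - overlap_set g) + card (A \<inter> B)"
    by (rule card_Un_le)
  finally have "\<epsilon> * card (A - (g <# A)) \<le> \<epsilon> * card (carrier G - overlap_set g) + \<epsilon> * card (A \<inter> B)"
    using \<epsilon>_pos by (simp flip: distrib_left)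
  then show ?thesis
    using large card_A_Int_B by (simp add: card_A_Diff_l_coset right_diff_distrib)
qed

lemma stabiliser_subset: "stabiliser \<subseteq> carrier G"
  by (auto simp: stabiliser_def)

lemma stabiliser_overlap_set:
  assumes g: "g \<in> stabiliser"
  shows "\<epsilon> * card (carrier G - overlap_set g) \<le> 4 * \<eta>"
proof -
  have "4 * \<eta> < \<epsilon> * overlap g" "g \<in> carrier G"
    using g by (auto simp: stabiliser_def)
  moreover have "\<epsilon> * overlap g \<le> \<epsilon> * card (overlap_set g)"
    using overlap_le_card_overlap_set[of g] \<epsilon>_pos calculation(2) by simp
  ultimately show ?thesis
    using overlap_set_bound by fastforce
qed

lemma stabiliser_overlap: "g \<in> stabiliser \<Longrightarrow> \<epsilon> * card A - 6 * \<eta> \<le> \<epsilon> * overlap g"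
  using overlap_lower_bound stabiliser_overlap_set stabiliser_subset by blast

lemma \<sigma>_overlap_set:
  assumes g: "g \<in> carrier G"
  shows "\<sigma> ` overlap_set g = overlap_set (\<sigma> g)"
proof -
  have "\<sigma> ` B = A"
    unfolding B_def image_image using A_subset \<sigma>_involutive by (simp add: subset_iff cong: image_cong)
  moreover have "\<sigma> ` (U \<inter> (g <# U)) = \<sigma> ` U \<inter> (\<sigma> g <# \<sigma> ` U)" if "U \<subseteq> carrier G" for U
    using that g inj_on_image_Int[OF inj_on_\<sigma> that l_coset_subset_G[OF that g]]
    by (simp add: image_l_coset[OF \<sigma>_hom])
  ultimately show ?thesis
    unfolding overlap_set_def image_Un using A_subset B_subset by (auto simp: B_def[symmetric])
qed

lemma stabiliser_\<sigma>_closed: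
  assumes g: "g \<in> stabiliser"
  shows "\<sigma> g \<in> stabiliser"
proof -
  have g_carrier: "g \<in> carrier G"
    using g stabiliser_subset by blast
  have "card (overlap_set (\<sigma> g)) = card (overlap_set g)"
    using \<sigma>_overlap_set[OF g_carrier] card_image_\<sigma>[OF overlap_set_subset[OF g_carrier]] by simp
  then have "card (carrier G - overlap_set (\<sigma> g)) = card (carrier G - overlap_set g)"
    using overlap_set_subset g_carrier \<sigma>_carrier finite_subset_carrier by (simp add: card_Diff_subset)
  then have "\<epsilon> * card A - 6 * \<eta> \<le> \<epsilon> * overlap (\<sigma> g)"
    using overlap_lower_bound[OF \<sigma>_carrier[OF g_carrier]] stabiliser_overlap_set[OF g] by simp
  then show ?thesis
    using \<eta>_small \<eta>_nonneg \<sigma>_carrier[OF g_carrier] by (simp add: stabiliser_def)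
qed

lemma card_A_Diff_l_coset_mult:
  assumes g: "g \<in> carrier G" and h: "h \<in> carrier G"
  shows "card (A - ((g \<otimes> h) <# A)) \<le> card (A - (g <# A)) + card (A - (h <# A))"
proof -
  have "A - (g <# (h <# A)) \<subseteq> (A - (g <# A)) \<union> (g <# (A - (h <# A)))"
    by (auto simp: l_coset_eq_image)
  then have "A - ((g \<otimes> h) <# A) \<subseteq> (A - (g <# A)) \<union> (g <# (A - (h <# A)))"
    by (simp add: lcos_m_assoc[OF A_subset g h])
  then have "card (A - ((g \<otimes> h) <# A)) \<le> card ((A - (g <# A)) \<union> (g <# (A - (h <# A))))"
    using finite_A by (intro card_mono) (auto simp: l_coset_eq_image)
  also have "\<dots> \<le> card (A - (g <# A)) + card (g <# (A - (h <# A)))"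
    by (rule card_Un_le)
  also have "card (g <# (A - (h <# A))) = card (A - (h <# A))"
    using A_subset g by (intro card_l_coset) auto
  finally show ?thesis .
qed

lemma subgroup_stabiliser: "subgroup stabiliser G"
proof (rule subgroupI)
  show "stabiliser \<subseteq> carrier G"
    by (rule stabiliser_subset)
  have "overlap \<one> = card A"
    using A_subset by (simp add: overlap_def lcos_mult_one)
  then show "stabiliser \<noteq> {}"
    using \<eta>_small \<eta>_nonneg unfolding stabiliser_def by force
next
  fix g assume "g \<in> stabiliser"
  then show "inv g \<in> stabiliser"
    using card_Int_l_coset_inv[OF A_subset] by (simp add: stabiliser_def overlap_def)
next
  fix g h assume g: "g \<in> stabiliser" and h: "h \<in> stabiliser"
  then have carrier: "g \<in> carrier G" "h \<in> carrier G"
    using stabiliser_subset by auto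
  have "\<epsilon> * card (A - ((g \<otimes> h) <# A)) \<le> \<epsilon> * card (A - (g <# A)) + \<epsilon> * card (A - (h <# A))"
    using card_A_Diff_l_coset_mult[OF carrier] \<epsilon>_pos by (simp flip: distrib_left)
  then have "\<epsilon> * card A - 12 * \<eta> \<le> \<epsilon> * overlap (g \<otimes> h)"
    using stabiliser_overlap[OF g] stabiliser_overlap[OF h]
    by (simp add: card_A_Diff_l_coset right_diff_distrib)
  then show "g \<otimes> h \<in> stabiliser"
    using \<eta>_small \<eta>_nonneg carrier by (simp add: stabiliser_def)
qed

lemma sum_overlap: "Y \<subseteq> carrier G \<Longrightarrow> (\<Sum>g\<in>Y. overlap g) = card {(x, y) \<in> A \<times> A. x \<otimes> inv y \<in> Y}"
  unfolding overlap_def using finite_A A_subset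
  by (simp add: sum_card_Int_l_coset finite_subset_carrier)

lemma sum_overlap_carrier: "(\<Sum>g\<in>carrier G. \<epsilon> * overlap g) = \<epsilon> * (card A * card A)"
proof -
  have "{(x, y) \<in> A \<times> A. x \<otimes> inv y \<in> carrier G} = A \<times> A"
    using A_subset by auto
  then have "(\<Sum>g\<in>carrier G. overlap g) = card A * card A"
    by (simp add: sum_overlap card_cartesian_product)
  then show ?thesis
    by (simp flip: sum_distrib_left of_nat_sum)
qed

lemma card_A_pos: "0 < card A"
proof -
  have "0 < \<epsilon> * card A"
    using \<eta>_small \<eta>_nonneg by linarith
  then show ?thesis
    by (simp add: zero_less_mult_iff)
qed

lemma card_carrier_le_3_card_A: "card (carrier G) \<le> 3 * card A"
proof -
  have "\<epsilon> * card (carrier G) \<le> \<epsilon> * (3 * card A)"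
    using card_carrier_bound \<eta>_small \<eta>_nonneg by linarith
  then show ?thesis
    using \<epsilon>_pos by (simp del: of_nat_mult add: of_nat_mult[symmetric])
qed

lemma card_A_le_stabiliser: "\<epsilon> * card A \<le> \<epsilon> * card stabiliser + 12 * \<eta>"
proof -
  let ?a = "real (card A)"
  have "(\<Sum>g\<in>stabiliser. \<epsilon> * overlap g) \<le> (\<Sum>g\<in>stabiliser. \<epsilon> * ?a)"
    using overlap_le_card_A \<epsilon>_pos by (intro sum_mono) simp
  moreover have "(\<Sum>g\<in>carrier G - stabiliser. \<epsilon> * overlap g) \<le> (\<Sum>g\<in>carrier G - stabiliser. 4 * \<eta>)"
    by (intro sum_mono) (auto simp: stabiliser_def)
  moreover have "real (card (carrier G - stabiliser)) * (4 * \<eta>) \<le> (3 * ?a) * (4 * \<eta>)"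
    using card_carrier_le_3_card_A card_mono[OF finite_carrier, of "carrier G - stabiliser"] \<eta>_nonneg
    by (intro mult_right_mono) auto
  moreover have "(\<Sum>g\<in>carrier G. \<epsilon> * overlap g)
      = (\<Sum>g\<in>stabiliser. \<epsilon> * overlap g) + (\<Sum>g\<in>carrier G - stabiliser. \<epsilon> * overlap g)"
    using sum.subset_diff[OF stabiliser_subset finite_carrier] by (simp add: add.commute)
  ultimately have "?a * (\<epsilon> * ?a) \<le> ?a * (\<epsilon> * card stabiliser + 12 * \<eta>)"
    using sum_overlap_carrier by (simp add: algebra_simps)
  then show ?thesis
    using card_A_pos by simp
qed

lemma stabiliser_sum_lower_bound:
  "card stabiliser * (\<epsilon> * card A - 6 * \<eta>) \<le> (\<Sum>g\<in>stabiliser. \<epsilon> * overlap g)"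
  using sum_mono[of stabiliser "\<lambda>_. \<epsilon> * card A - 6 * \<eta>", OF stabiliser_overlap] by simp

lemma card_stabiliser_le: "\<epsilon> * card stabiliser \<le> \<epsilon> * card A + 12 * \<eta>"
proof (rule ccontr)
  define u where "u = \<epsilon> * card A"
  assume "\<not> \<epsilon> * card stabiliser \<le> \<epsilon> * card A + 12 * \<eta>"
  then have large: "u + 12 * \<eta> < \<epsilon> * card stabiliser"
    by (simp add: u_def)
  have u: "12 * \<eta> \<le> u" "0 < u - 6 * \<eta>"
    using \<eta>_small \<eta>_nonneg by (simp_all add: u_def)
  have "(\<Sum>g\<in>stabiliser. \<epsilon> * overlap g) \<le> (\<Sum>g\<in>carrier G. \<epsilon> * overlap g)"
    using stabiliser_subset finite_carrier \<epsilon>_pos by (intro sum_mono2) auto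
  then have "card stabiliser * (u - 6 * \<eta>) \<le> \<epsilon> * (card A * card A)"
    using stabiliser_sum_lower_bound sum_overlap_carrier by (simp add: u_def)
  then have "\<epsilon> * card stabiliser * (u - 6 * \<eta>) \<le> u * u"
    using \<epsilon>_pos by (auto simp: u_def mult.assoc mult.left_commute dest: mult_left_mono[where c = \<epsilon>])
  moreover have "(u + 12 * \<eta>) * (u - 6 * \<eta>) < \<epsilon> * card stabiliser * (u - 6 * \<eta>)"
    using large u by (intro mult_strict_right_mono)
  moreover have "12 * \<eta> * (6 * \<eta>) \<le> u * (6 * \<eta>)"
    using u \<eta>_nonneg by (intro mult_right_mono) auto
  ultimately show False
    by (simp add: algebra_simps)
qed

lemma card_carrier_lt_3_card_stabiliser: "card (carrier G) < 3 * card stabiliser"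
proof -
  have "\<epsilon> * card (carrier G) < \<epsilon> * (3 * card stabiliser)"
    using card_carrier_bound card_A_le_stabiliser \<eta>_small \<eta>_nonneg by linarith
  then show ?thesis
    using \<epsilon>_pos by (simp del: of_nat_mult add: of_nat_mult[symmetric])
qed

lemma stabiliser_mult_inv_iff:
  "x \<in> carrier G \<Longrightarrow> y \<in> carrier G \<Longrightarrow> x \<otimes> inv y \<in> stabiliser \<longleftrightarrow> (x \<in> stabiliser \<longleftrightarrow> y \<in> stabiliser)"
  using finite_carrier subgroup_stabiliser card_carrier_lt_3_card_stabiliser
  by (rule large_subgroup_mult_inv_mem_iff)

lemma sum_overlap_stabiliser:
  "(\<Sum>g\<in>stabiliser. overlap g) = card (A \<inter> stabiliser) ^ 2 + card (A - stabiliser) ^ 2"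
proof -
  have "{(x, y) \<in> A \<times> A. x \<otimes> inv y \<in> stabiliser}
      = (A \<inter> stabiliser) \<times> (A \<inter> stabiliser) \<union> (A - stabiliser) \<times> (A - stabiliser)"
    using A_subset stabiliser_mult_inv_iff by blast
  moreover have "card (\<dots>) = card (A \<inter> stabiliser) ^ 2 + card (A - stabiliser) ^ 2"
    using finite_A by (subst card_Un_disjoint) (auto simp: card_cartesian_product power2_eq_square)
  ultimately show ?thesis
    using sum_overlap[OF stabiliser_subset] by simp
qed

lemma min_split_bound: "\<epsilon> * min (card (A \<inter> stabiliser)) (card (A - stabiliser)) \<le> 18 * \<eta>"
proof -
  define p q m u where "p = real (card (A \<inter> stabiliser))" and "q = real (card (A - stabiliser))"
    and "m = min p q" and "u = \<epsilon> * card A"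
  have a: "real (card A) = p + q"
    using card_Int_Diff[OF finite_A, of stabiliser] by (simp add: p_def q_def)
  have u: "0 < u" "12 * \<eta> \<le> u"
    using \<eta>_small \<eta>_nonneg by (simp_all add: u_def)
  have "p * p + q * q \<le> (p + q) * (p + q) - (p + q) * m"
    by (cases "p \<le> q") (auto simp: m_def p_def q_def algebra_simps min_def
        intro: mult_left_mono mult_right_mono)
  then have squares: "\<epsilon> * \<epsilon> * (p * p + q * q) \<le> u * u - u * (\<epsilon> * m)"
    using \<epsilon>_pos by (auto simp: u_def a algebra_simps dest: mult_left_mono[where c = "\<epsilon> * \<epsilon>"])
  have "(u - 12 * \<eta>) * (u - 6 * \<eta>) \<le> \<epsilon> * card stabiliser * (u - 6 * \<eta>)"
    using card_A_le_stabiliser u by (intro mult_right_mono) (auto simp: u_def)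
  also have "\<dots> \<le> \<epsilon> * (\<Sum>g\<in>stabiliser. \<epsilon> * overlap g)"
    using stabiliser_sum_lower_bound \<epsilon>_pos by (simp add: u_def mult.assoc)
  also have "\<dots> = \<epsilon> * \<epsilon> * (p * p + q * q)"
    using sum_overlap_stabiliser
    by (simp flip: sum_distrib_left of_nat_sum add: p_def q_def power2_eq_square)
  finally have "(u - 12 * \<eta>) * (u - 6 * \<eta>) \<le> \<epsilon> * \<epsilon> * (p * p + q * q)" .
  moreover have "u * u - u * (18 * \<eta>) \<le> (u - 12 * \<eta>) * (u - 6 * \<eta>)"
    using \<eta>_nonneg by (simp add: algebra_simps)
  ultimately have "u * (\<epsilon> * m) \<le> u * (18 * \<eta>)"
    using squares by linarith
  then show ?thesis
    using u by (simp add: m_def p_def q_def)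
qed

lemma no_\<sigma>_invariant_near_superset:
  assumes Q: "Q \<subseteq> carrier G" and \<sigma>_Q: "\<sigma> ` Q \<subseteq> Q"
    and A_Q: "\<epsilon> * card (A - Q) \<le> 18 * \<eta>" and card_Q: "\<epsilon> * card Q \<le> \<epsilon> * card A + 14 * \<eta>"
  shows False
proof -
  have "B - Q \<subseteq> \<sigma> ` (A - Q)"
    using \<sigma>_Q by (auto simp: B_def)
  then have "card (B - Q) \<le> card (A - Q)"
    using finite_A card_image_le[of "A - Q" \<sigma>] by (meson card_mono finite_Diff finite_imageI order_trans)
  moreover have "card A + card B = card (A \<union> B) + card (A \<inter> B)"
    using finite_A finite_B by (rule card_Un_Int)
  moreover have "card (A \<union> B) \<le> card Q + card (A - Q) + card (B - Q)"
  proof -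
    have "A \<union> B \<subseteq> Q \<union> (A - Q) \<union> (B - Q)"
      by blast
    then have "card (A \<union> B) \<le> card (Q \<union> (A - Q) \<union> (B - Q))"
      using finite_subset_carrier[OF Q] finite_A finite_B by (intro card_mono) auto
    also have "\<dots> \<le> card Q + card (A - Q) + card (B - Q)"
      by (meson add_le_mono card_Un_le order_trans order_refl)
    finally show ?thesis .
  qed
  ultimately have "2 * card A \<le> card Q + 2 * card (A - Q) + card (A \<inter> B)"
    using card_B by linarith
  then have "\<epsilon> * (2 * card A) \<le> \<epsilon> * (card Q + 2 * card (A - Q) + card (A \<inter> B))"
    using \<epsilon>_pos by (simp del: of_nat_mult of_nat_add add: of_nat_mult[symmetric] of_nat_add[symmetric])
  then show False
    using A_Q card_Q card_A_Int_B \<eta>_small \<eta>_nonneg by (simp add: algebra_simps)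
qed

lemma small_boundary_impossible: False
proof (cases "card (A \<inter> stabiliser) \<le> card (A - stabiliser)")
  case True
  let ?Q = "carrier G - stabiliser"
  have "\<sigma> g \<in> ?Q" if "g \<in> ?Q" for g
    using that stabiliser_\<sigma>_closed[of "\<sigma> g"] \<sigma>_involutive \<sigma>_carrier by auto
  then have \<sigma>_Q: "\<sigma> ` ?Q \<subseteq> ?Q"
    by blast
  have "A - ?Q = A \<inter> stabiliser"
    using A_subset by blast
  then have A_Q: "\<epsilon> * card (A - ?Q) \<le> 18 * \<eta>"
    using True min_split_bound by (simp add: min_def)
  have "real (card ?Q) = real (card (carrier G)) - card stabiliser"
    using stabiliser_subset finite_carrier
    by (simp add: card_Diff_subset finite_subset_carrier card_mono of_nat_diff)
  then have card_Q: "\<epsilon> * card ?Q \<le> \<epsilon> * card A + 14 * \<eta>"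
    using card_carrier_bound card_A_le_stabiliser by (simp add: right_diff_distrib)
  show False
    using no_\<sigma>_invariant_near_superset[OF _ \<sigma>_Q A_Q card_Q] by blast
next
  case False
  then have A_K: "\<epsilon> * card (A - stabiliser) \<le> 18 * \<eta>"
    using min_split_bound by (simp add: min_def)
  have "\<sigma> ` stabiliser \<subseteq> stabiliser"
    using stabiliser_\<sigma>_closed by blast
  moreover have "\<epsilon> * card stabiliser \<le> \<epsilon> * card A + 14 * \<eta>"
    using card_stabiliser_le \<eta>_nonneg by linarith
  ultimately show False
    using no_\<sigma>_invariant_near_superset[OF stabiliser_subset _ A_K] by blast
qed

end

context twisted_cayley_expander
begin

theorem twisted_cayley_vertex_expander:
  "vertex_expander (carrier G) (cayley_adj G T \<sigma>) (\<epsilon> / (100 * (d + 1)))"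
  unfolding vertex_expander_def
proof (intro allI impI)
  fix A assume A: "A \<subseteq> carrier G" and half: "real (card A) \<le> real (card (carrier G)) / 2"
  show "\<epsilon> / (100 * (d + 1)) * card A \<le> card (vertex_boundary (carrier G) (cayley_adj G T \<sigma>) A)"
  proof (rule ccontr)
    assume "\<not> ?thesis"
    then have
      "100 * real (d + 1) * card (vertex_boundary (carrier G) (cayley_adj G T \<sigma>) A) < \<epsilon> * card A"
      by (simp add: field_simps)
    then interpret twisted_small_boundary G S d \<epsilon> T \<sigma> A
      using A half by unfold_locales
    show False
      by (rule small_boundary_impossible)
  qed
qed

end

locale cayley_expander_involutions =
  cayley_expander G S d \<epsilon> + commuting_involutions G \<sigma> k
  for G :: "('a, 'b) monoid_scheme" (structure) and S d \<epsilon> \<sigma> k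
begin

lemma twist_closure_twisted_cayley_expander:
  assumes i: "i \<in> {1..k}"
  shows "twisted_cayley_expander G S d \<epsilon> (twist_closure \<sigma> k S) (\<sigma> i)"
proof unfold_locales
  show "\<sigma> i \<in> hom G G"
    using i by (rule \<sigma>_hom)
  show "\<sigma> i (\<sigma> i x) = x" if "x \<in> carrier G" for x
    using i that by (rule \<sigma>_involutive)
  show "twist_closure \<sigma> k S \<subseteq> carrier G"
    using S_subset by (rule twist_closure_subset)
  show "S \<subseteq> twist_closure \<sigma> k S"
    by (rule subset_twist_closure)
  show "\<sigma> i ` S \<subseteq> twist_closure \<sigma> k S"
    using i by (rule image_subset_twist_closure)
qed

lemma twist_closure_undirected_bounded_degree:
  assumes i: "i \<in> {1..k}"
  shows "undirected_bounded_degree (carrier G)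
           (cayley_adj G (twist_closure \<sigma> k S) (\<sigma> i)) (2 ^ k * d)"
proof (rule twisted_cayley_undirected_bounded_degree)
  show "twist_closure \<sigma> k S \<subseteq> carrier G"
    using S_subset by (rule twist_closure_subset)
  show "inv t \<in> twist_closure \<sigma> k S" if "t \<in> twist_closure \<sigma> k S" for t
    using S_subset S_inv_closed that by (rule twist_closure_inv_closed)
  show "\<sigma> i ` twist_closure \<sigma> k S \<subseteq> twist_closure \<sigma> k S"
    using S_subset i by (rule twist_closure_\<sigma>_closed)
  show "card (twist_closure \<sigma> k S) \<le> 2 ^ k * d"
    using card_twist_closure_le[OF finite_subset_carrier[OF S_subset]] card_S
    by (meson le_trans mult_le_mono2)
qed (use finite_carrier i \<sigma>_hom \<sigma>_involutive in auto)

lemma twist_closure_vertex_expander: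
  "i \<in> {1..k} \<Longrightarrow>
    vertex_expander (carrier G) (cayley_adj G (twist_closure \<sigma> k S) (\<sigma> i)) (\<epsilon> / (100 * (d + 1)))"
  using twist_closure_twisted_cayley_expander
  by (rule twisted_cayley_expander.twisted_cayley_vertex_expander)

end

theorem theorem8p2:
  fixes G :: "nat \<Rightarrow> ('a, 'b) monoid_scheme"
    and S :: "nat \<Rightarrow> 'a set"
    and \<sigma> :: "nat \<Rightarrow> nat \<Rightarrow> 'a \<Rightarrow> 'a"
    and d k :: nat
  assumes grp: "\<And>n. group (G n)"
    and fin: "\<And>n. finite (carrier (G n))"
    and S_sub: "\<And>n. S n \<subseteq> carrier (G n)"
    and S_sym: "\<And>n s. s \<in> S n \<Longrightarrow> inv\<^bsub>G n\<^esub> s \<in> S n"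
    and exp: "expander_family (\<lambda>n. carrier (G n)) (\<lambda>n. cayley_adj (G n) (S n) id) d"
    and k2: "k \<ge> 2"
    and aut: "\<And>n i. i \<in> {1..k} \<Longrightarrow> \<sigma> i n \<in> iso (G n) (G n)"
    and ord2: "\<And>n i x. i \<in> {1..k} \<Longrightarrow> x \<in> carrier (G n) \<Longrightarrow> \<sigma> i n (\<sigma> i n x) = x"
    and comm: "\<And>n i j x. i \<in> {1..k} \<Longrightarrow> j \<in> {1..k} \<Longrightarrow> x \<in> carrier (G n) \<Longrightarrow>
                 \<sigma> i n (\<sigma> j n x) = \<sigma> j n (\<sigma> i n x)"
  shows "(\<forall>i \<in> {1..k}.
            expander_family (\<lambda>n. carrier (G n))
              (\<lambda>n. cayley_adj (G n) (twist_closure (\<lambda>i. \<sigma> i n) k (S n)) (\<sigma> i n)) (2 ^ k * d))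
       \<and> (\<forall>i \<in> {1..k}. \<forall>j \<in> {1..k}. \<forall>n.
            equal_up_to_sign
              (eigenvalues_mset (cayley_adj_matrix (G n) (twist_closure (\<lambda>i. \<sigma> i n) k (S n)) (\<sigma> i n)))
              (eigenvalues_mset (cayley_adj_matrix (G n) (twist_closure (\<lambda>i. \<sigma> i n) k (S n)) (\<sigma> j n))))"
proof -
  obtain \<epsilon> where \<epsilon>: "0 < \<epsilon>" "\<And>n. vertex_expander (carrier (G n)) (cayley_adj (G n) (S n) id) \<epsilon>"
    and degree: "\<And>n. undirected_bounded_degree (carrier (G n)) (cayley_adj (G n) (S n) id) d"
    using exp unfolding expander_family_def by blast
  have setting: "cayley_expander_involutions (G n) (S n) d \<epsilon> (\<lambda>i. \<sigma> i n) k" for n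
  proof (intro cayley_expander_involutions.intro cayley_expander.intro commuting_involutions.intro)
    show "cayley_expander_axioms (G n) (S n) d \<epsilon>"
      using fin S_sub S_sym \<epsilon> group.card_generators_le_degree[OF grp degree S_sub]
      by (simp add: cayley_expander_axioms_def)
    show "commuting_involutions_axioms (G n) (\<lambda>i. \<sigma> i n) k"
      using aut ord2 comm by (simp add: commuting_involutions_axioms_def iso_def)
  qed (rule grp)+
  have "expander_family (\<lambda>n. carrier (G n))
      (\<lambda>n. cayley_adj (G n) (twist_closure (\<lambda>i. \<sigma> i n) k (S n)) (\<sigma> i n)) (2 ^ k * d)"
    if "i \<in> {1..k}" for i
    unfolding expander_family_def
    using \<epsilon>(1) that cayley_expander_involutions.twist_closure_undirected_bounded_degree[OF setting]
      cayley_expander_involutions.twist_closure_vertex_expander[OF setting]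
    by (intro conjI allI exI[of _ "\<epsilon> / (100 * (d + 1))"]) auto
  moreover have "equal_up_to_sign
      (eigenvalues_mset (cayley_adj_matrix (G n) (twist_closure (\<lambda>i. \<sigma> i n) k (S n)) (\<sigma> i n)))
      (eigenvalues_mset (cayley_adj_matrix (G n) (twist_closure (\<lambda>i. \<sigma> i n) k (S n)) (\<sigma> j n)))"
    if "i \<in> {1..k}" "j \<in> {1..k}" for i j n
    using cayley_expander_involutions.axioms(2)[OF setting] fin S_sub that
    by (rule commuting_involutions.twist_closure_spectra_equal_up_to_sign)
  ultimately show ?thesis
    by blast
qed

end
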